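(* Robust ex-post stability does not imply ex-ante stability: there exist a set $N$ of $n$ agents and a set $O$ of $n$ objects with strict preferences $\succ_i$ over $O$ ($i\in N$) and strict priorities $\succ_o$ over $N$ ($o\in O$), and a random matching $p$, such that $p$ is robust ex-post stable but not ex-ante stable.
   Context: A random matching is an $n\times n$ bistochastic matrix $p=[p(i,o)]_{i\in N,o\in O}$ (nonnegative entries, every row and every column summing to $1$); it is deterministic if all entries lie in $\{0,1\}$. A decomposition of $p$ is a representation $p=\sum_{j=1}^k\lambda_jP_j$ with $P_j$ deterministic matchings, $\lambda_j\in(0,1]$, $\sum_j\lambda_j=1$. A deterministic matching $p$ is stable if there exist no $i,j\in N$, $o,o'\in O$ with $p(i,o')=1$, $p(j,o)=1$, $o\succ_i o'$, $i\succ_o j$. A random matching $p$ is ex-ante stable if there exist no $i,j\in N$, $o,o'\in O$ with $p(i,o')>0$, $p(j,o)>0$, $o\succ_i o'$, $i\succ_o j$; it is robust ex-post stable if every decomposition of $p$ consists only of stable deterministic matchings. *)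

theory Defs
  imports Complex_Main
begin

text \<open>Agents N and objects Ob are finite sets of naturals (any finite sets can be so encoded).
  A strict preference/priority on a set A is a strict linear order on A, given as a relation
  (x, y) \<in> r meaning x is strictly preferred to y.  Matchings are functions
  N \<times> O \<rightarrow> real, read only on N \<times> Ob.\<close>

definition strict_pref_on :: "'a set \<Rightarrow> 'a rel \<Rightarrow> bool" where
  "strict_pref_on A r \<longleftrightarrow> r \<subseteq> A \<times> A \<and> strict_linear_order_on A r"

definition random_matching :: "nat set \<Rightarrow> nat set \<Rightarrow> (nat \<Rightarrow> nat \<Rightarrow> real) \<Rightarrow> bool" where
  "random_matching N Ob p \<longleftrightarrow>
     (\<forall>i\<in>N. \<forall>ob\<in>Ob. p i ob \<ge> 0) \<and>
     (\<forall>i\<in>N. (\<Sum>ob\<in>Ob. p i ob) = 1) \<and>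
     (\<forall>ob\<in>Ob. (\<Sum>i\<in>N. p i ob) = 1)"

definition deterministic_matching :: "nat set \<Rightarrow> nat set \<Rightarrow> (nat \<Rightarrow> nat \<Rightarrow> real) \<Rightarrow> bool" where
  "deterministic_matching N Ob P \<longleftrightarrow>
     random_matching N Ob P \<and> (\<forall>i\<in>N. \<forall>ob\<in>Ob. P i ob \<in> {0, 1})"

definition decomposition :: "nat set \<Rightarrow> nat set \<Rightarrow> (nat \<Rightarrow> nat \<Rightarrow> real)
    \<Rightarrow> (real \<times> (nat \<Rightarrow> nat \<Rightarrow> real)) list \<Rightarrow> bool" where
  "decomposition N Ob p D \<longleftrightarrow>
     D \<noteq> [] \<and>
     (\<forall>(l, P) \<in> set D. 0 < l \<and> l \<le> 1 \<and> deterministic_matching N Ob P) \<and>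
     sum_list (map fst D) = 1 \<and>
     (\<forall>i\<in>N. \<forall>ob\<in>Ob. p i ob = sum_list (map (\<lambda>(l, P). l * P i ob) D))"

definition stable_det :: "nat set \<Rightarrow> nat set \<Rightarrow> (nat \<Rightarrow> nat rel) \<Rightarrow> (nat \<Rightarrow> nat rel)
    \<Rightarrow> (nat \<Rightarrow> nat \<Rightarrow> real) \<Rightarrow> bool" where
  "stable_det N Ob pref prio P \<longleftrightarrow>
     \<not> (\<exists>i\<in>N. \<exists>j\<in>N. \<exists>ob\<in>Ob. \<exists>ob'\<in>Ob.
          P i ob' = 1 \<and> P j ob = 1 \<and> (ob, ob') \<in> pref i \<and> (i, j) \<in> prio ob)"

definition ex_ante_stable :: "nat set \<Rightarrow> nat set \<Rightarrow> (nat \<Rightarrow> nat rel) \<Rightarrow> (nat \<Rightarrow> nat rel)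
    \<Rightarrow> (nat \<Rightarrow> nat \<Rightarrow> real) \<Rightarrow> bool" where
  "ex_ante_stable N Ob pref prio p \<longleftrightarrow>
     \<not> (\<exists>i\<in>N. \<exists>j\<in>N. \<exists>ob\<in>Ob. \<exists>ob'\<in>Ob.
          p i ob' > 0 \<and> p j ob > 0 \<and> (ob, ob') \<in> pref i \<and> (i, j) \<in> prio ob)"

definition robust_ex_post_stable :: "nat set \<Rightarrow> nat set \<Rightarrow> (nat \<Rightarrow> nat rel) \<Rightarrow> (nat \<Rightarrow> nat rel)
    \<Rightarrow> (nat \<Rightarrow> nat \<Rightarrow> real) \<Rightarrow> bool" where
  "robust_ex_post_stable N Ob pref prio p \<longleftrightarrow>
     (\<forall>D. decomposition N Ob p D \<longrightarrow> (\<forall>(l, P) \<in> set D. stable_det N Ob pref prio P))"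

end

theory Submission
  imports Defs
begin

text \<open>Three agents and three objects with cyclic preferences and priorities. The random matching
  that mixes the diagonal matching \<open>i \<mapsto> i\<close> and the shift \<open>i \<mapsto> i + 1 (mod 3)\<close> with weight 1/2 each
  has only these two deterministic matchings inside its support, so every decomposition uses only
  them. Both are stable: in the diagonal matching every agent gets its favourite object, in the
  shift every object gets its highest-priority agent. Yet agent 1 and object 3 form an ex-ante
  blocking pair, because agent 1 may receive 2 (it prefers 3) while object 3 may go to agent 3
  (it prioritises agent 1).\<close>

lemma decomposition_component_le:
  assumes "decomposition N Ob p D" "(l, P) \<in> set D" "i \<in> N" "ob \<in> Ob"
  shows "l * P i ob \<le> p i ob"
proof -
  have components: "\<And>l' P'. (l', P') \<in> set D \<Longrightarrow> 0 < l' \<and> deterministic_matching N Ob P'"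
    and p_eq: "p i ob = sum_list (map (\<lambda>(l, P). l * P i ob) D)"
    using assms unfolding decomposition_def by auto
  have "\<And>x. x \<in> set (map (\<lambda>(l, P). l * P i ob) D) \<Longrightarrow> 0 \<le> x"
    using components assms(3,4)
    by (fastforce simp: deterministic_matching_def random_matching_def)
  moreover have "l * P i ob \<in> set (map (\<lambda>(l, P). l * P i ob) D)"
    using assms(2) by force
  ultimately show ?thesis
    unfolding p_eq by (rule member_le_sum_list[rotated])
qed

lemma decomposition_component_support:
  assumes "decomposition N Ob p D" "(l, P) \<in> set D" "i \<in> N" "ob \<in> Ob" "P i ob = 1"
  shows "0 < p i ob"
proof -
  have "0 < l"
    using assms(1,2) unfolding decomposition_def by auto
  with decomposition_component_le[OF assms(1-4)] assms(5) show ?thesis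
    by simp
qed

lemma robust_ex_post_stable_if_supported_stable:
  assumes "\<And>P. deterministic_matching N Ob P \<Longrightarrow> (\<forall>i\<in>N. \<forall>ob\<in>Ob. P i ob = 1 \<longrightarrow> 0 < p i ob)
             \<Longrightarrow> stable_det N Ob pref prio P"
  shows "robust_ex_post_stable N Ob pref prio p"
  unfolding robust_ex_post_stable_def
proof (intro allI impI ballI)
  fix D lP
  assume D: "decomposition N Ob p D" and lP: "lP \<in> set D"
  obtain l P where lP_eq: "lP = (l, P)" by fastforce
  have "deterministic_matching N Ob P"
    using D lP unfolding lP_eq decomposition_def by auto
  moreover have "\<forall>i\<in>N. \<forall>ob\<in>Ob. P i ob = 1 \<longrightarrow> 0 < p i ob"
    using decomposition_component_support[OF D lP[unfolded lP_eq]] by blast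
  ultimately show "case lP of (l, P) \<Rightarrow> stable_det N Ob pref prio P"
    using assms lP_eq by simp
qed

lemma stable_det_cong:
  assumes "\<forall>i\<in>N. \<forall>ob\<in>Ob. P i ob = Q i ob"
  shows "stable_det N Ob pref prio P \<longleftrightarrow> stable_det N Ob pref prio Q"
  using assms unfolding stable_det_def by auto

definition diagonal_matching :: "nat \<Rightarrow> nat \<Rightarrow> real" where
  "diagonal_matching i ob = (if ob = i then 1 else 0)"

definition shift_matching :: "nat \<Rightarrow> nat \<Rightarrow> real" where
  "shift_matching i ob = (if ob = i mod 3 + 1 then 1 else 0)"

definition cyclic_p :: "nat \<Rightarrow> nat \<Rightarrow> real" where
  "cyclic_p i ob = (diagonal_matching i ob + shift_matching i ob) / 2"

definition cyclic_pref :: "nat \<Rightarrow> nat rel" where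
  "cyclic_pref i = (if i = 1 then {(1,3),(1,2),(3,2)} else if i = 2 then {(2,3),(2,1),(3,1)}
     else {(3,1),(3,2),(1,2)})"

definition cyclic_prio :: "nat \<Rightarrow> nat rel" where
  "cyclic_prio ob = (if ob = 1 then {(3,1),(3,2),(1,2)} else if ob = 2 then {(1,2),(1,3),(2,3)}
     else {(2,1),(2,3),(1,3)})"

lemma strict_pref_on_cyclic_pref: "i \<in> {1,2,3} \<Longrightarrow> strict_pref_on {1,2,3} (cyclic_pref i)"
  by (auto simp: strict_pref_on_def strict_linear_order_on_def cyclic_pref_def
      trans_def irrefl_def total_on_def)

lemma strict_pref_on_cyclic_prio: "ob \<in> {1,2,3} \<Longrightarrow> strict_pref_on {1,2,3} (cyclic_prio ob)"
  by (auto simp: strict_pref_on_def strict_linear_order_on_def cyclic_prio_def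
      trans_def irrefl_def total_on_def)

lemma random_matching_cyclic_p: "random_matching {1,2,3} {1,2,3} cyclic_p"
  by (simp add: random_matching_def cyclic_p_def diagonal_matching_def shift_matching_def)

lemma stable_diagonal_matching:
  "stable_det {1,2,3} {1,2,3} cyclic_pref cyclic_prio diagonal_matching"
  by (auto simp: stable_det_def diagonal_matching_def cyclic_pref_def cyclic_prio_def)

lemma stable_shift_matching:
  "stable_det {1,2,3} {1,2,3} cyclic_pref cyclic_prio shift_matching"
  by (auto simp: stable_det_def shift_matching_def cyclic_pref_def cyclic_prio_def)

lemma supported_by_cyclic_p_cases:
  assumes det: "deterministic_matching {1,2,3} {1,2,3} P"
    and supp: "\<forall>i\<in>{1,2,3}. \<forall>ob\<in>{1,2,3}. P i ob = 1 \<longrightarrow> 0 < cyclic_p i ob"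
  shows "(\<forall>i\<in>{1,2,3}. \<forall>ob\<in>{1,2,3}. P i ob = diagonal_matching i ob) \<or>
         (\<forall>i\<in>{1,2,3}. \<forall>ob\<in>{1,2,3}. P i ob = shift_matching i ob)"
proof -
  have entries_01: "P i ob \<in> {0, 1}" if "i \<in> {1,2,3}" "ob \<in> {1,2,3}" for i ob
    using det that unfolding deterministic_matching_def by blast
  have outside_support: "P 1 3 = 0" "P 2 1 = 0" "P 3 2 = 0"
    using entries_01 supp
    by (fastforce simp: cyclic_p_def diagonal_matching_def shift_matching_def)+
  have row_sum: "(\<Sum>ob\<in>{1,2,3}. P i ob) = 1" if "i \<in> {1,2,3}" for i
    using det that unfolding deterministic_matching_def random_matching_def by blast
  have rows: "P 1 1 + P 1 2 = 1" "P 2 2 + P 2 3 = 1" "P 3 3 + P 3 1 = 1"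
    using row_sum[of 1] row_sum[of 2] row_sum[of 3] outside_support by simp_all
  have col_sum: "(\<Sum>i\<in>{1,2,3}. P i ob) = 1" if "ob \<in> {1,2,3}" for ob
    using det that unfolding deterministic_matching_def random_matching_def by blast
  have cols: "P 1 1 + P 3 1 = 1" "P 1 2 + P 2 2 = 1" "P 2 3 + P 3 3 = 1"
    using col_sum[of 1] col_sum[of 2] col_sum[of 3] outside_support by simp_all
  have "P 1 1 \<in> {0, 1}"
    using entries_01 by simp
  then show ?thesis
    using rows cols outside_support
    by (auto simp: diagonal_matching_def shift_matching_def)
qed

lemma robust_ex_post_stable_cyclic_p:
  "robust_ex_post_stable {1,2,3} {1,2,3} cyclic_pref cyclic_prio cyclic_p"
proof (rule robust_ex_post_stable_if_supported_stable)
  fix P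
  assume "deterministic_matching {1,2,3} {1,2,3} P"
    and "\<forall>i\<in>{1,2,3}. \<forall>ob\<in>{1,2,3}. P i ob = 1 \<longrightarrow> 0 < cyclic_p i ob"
  then consider "\<forall>i\<in>{1,2,3}. \<forall>ob\<in>{1,2,3}. P i ob = diagonal_matching i ob"
    | "\<forall>i\<in>{1,2,3}. \<forall>ob\<in>{1,2,3}. P i ob = shift_matching i ob"
    using supported_by_cyclic_p_cases by blast
  then show "stable_det {1,2,3} {1,2,3} cyclic_pref cyclic_prio P"
    using stable_diagonal_matching stable_shift_matching stable_det_cong by cases blast+
qed

lemma not_ex_ante_stable_cyclic_p:
  "\<not> ex_ante_stable {1,2,3} {1,2,3} cyclic_pref cyclic_prio cyclic_p"
proof -
  have "cyclic_p 1 2 > 0" "cyclic_p 3 3 > 0" "(3, 2) \<in> cyclic_pref 1" "(1, 3) \<in> cyclic_prio 3"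
    by (simp_all add: cyclic_p_def diagonal_matching_def shift_matching_def
        cyclic_pref_def cyclic_prio_def)
  then show ?thesis
    unfolding ex_ante_stable_def by blast
qed

theorem proposition4:
  shows "\<exists>(N::nat set) (Ob::nat set) (pref::nat \<Rightarrow> nat rel) (prio::nat \<Rightarrow> nat rel)
           (p::nat \<Rightarrow> nat \<Rightarrow> real).
           finite N \<and> finite Ob \<and> card N = card Ob \<and>
           (\<forall>i\<in>N. strict_pref_on Ob (pref i)) \<and>
           (\<forall>ob\<in>Ob. strict_pref_on N (prio ob)) \<and>
           random_matching N Ob p \<and>
           robust_ex_post_stable N Ob pref prio p \<and>
           \<not> ex_ante_stable N Ob pref prio p"
proof (intro exI conjI)
  show "\<forall>i\<in>{1,2,3}. strict_pref_on {1,2,3} (cyclic_pref i)"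
    using strict_pref_on_cyclic_pref by blast
  show "\<forall>ob\<in>{1,2,3}. strict_pref_on {1,2,3} (cyclic_prio ob)"
    using strict_pref_on_cyclic_prio by blast
qed (use random_matching_cyclic_p robust_ex_post_stable_cyclic_p not_ex_ante_stable_cyclic_p in simp_all)

end
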